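(* Let $\Bbbk$ be a field, $n\ge2$, $q\in\Bbbk$ a primitive $n$-th root of unity, $C_n=\langle g\rangle$ the cyclic group of order $n$ and $A$ a unital associative $\Bbbk$-algebra. Let $\cdot:\Bbbk C_n\otimes A\to A$ be a partial action of $\Bbbk C_n$ on $A$. Then for each $w\in A$ such that $g^i\cdot w=q^{-i}(g^i\cdot1_A)w$ for all $0\le i\le n-1$, one has $(g^i\cdot w)^\ell=q^{-i\ell}(g^i\cdot1_A)w^\ell$ for all $\ell\ge1$ and $0\le i\le n-1$. Moreover, if the partial action is symmetric, then $(g^i\cdot w)^\ell=q^{-i\ell}w^\ell(g^i\cdot1_A)$.
   Context: $\Bbbk C_n$ is the group Hopf algebra with $g$ group-like. A partial action of a bialgebra $H$ on $A$ is a linear map $\cdot:H\otimes A\to A$ with $1_H\cdot a=a$, $h\cdot(ab)=(h_1\cdot a)(h_2\cdot b)$, $h\cdot(k\cdot a)=(h_1\cdot1_A)(h_2k\cdot a)$; it is symmetric if moreover $h\cdot(k\cdot a)=(h_1k\cdot a)(h_2\cdot1_A)$. *)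

theory Defs
  imports Complex_Main
begin

definition kalgebra :: "('k::field \<Rightarrow> 'a::ring_1 \<Rightarrow> 'a) \<Rightarrow> bool" where
  "kalgebra smul \<longleftrightarrow> Vector_Spaces.vector_space smul \<and>
     (\<forall>c a b. smul c (a * b) = smul c a * b \<and> smul c (a * b) = a * smul c b)"

definition prim_root :: "nat \<Rightarrow> 'k::field \<Rightarrow> bool" where
  "prim_root n q \<longleftrightarrow> q ^ n = 1 \<and> (\<forall>k. 0 < k \<and> k < n \<longrightarrow> q ^ k \<noteq> 1)"

text \<open>A linear map  k C_n \<otimes> A \<rightarrow> A  is the same as a family of n linear maps
  act i = (g^i \<cdot> _), i = 0..n-1 (the basis g^0,...,g^(n-1) of k C_n).
  Since the partial-action axioms are linear in h and k, and g^i is group-like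
  (\<Delta>(g^i) = g^i \<otimes> g^i), they are equivalent to the axioms on basis elements.\<close>
definition partial_action_Cn ::
  "('k::field \<Rightarrow> 'a::ring_1 \<Rightarrow> 'a) \<Rightarrow> nat \<Rightarrow> (nat \<Rightarrow> 'a \<Rightarrow> 'a) \<Rightarrow> bool" where
  "partial_action_Cn smul n act \<longleftrightarrow>
     (\<forall>i<n. Vector_Spaces.linear smul smul (act i)) \<and>
     (\<forall>a. act 0 a = a) \<and>
     (\<forall>i<n. \<forall>a b. act i (a * b) = act i a * act i b) \<and>
     (\<forall>i<n. \<forall>j<n. \<forall>a. act i (act j a) = act i 1 * act ((i + j) mod n) a)"

definition symmetric_partial_action_Cn ::
  "('k::field \<Rightarrow> 'a::ring_1 \<Rightarrow> 'a) \<Rightarrow> nat \<Rightarrow> (nat \<Rightarrow> 'a \<Rightarrow> 'a) \<Rightarrow> bool" where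
  "symmetric_partial_action_Cn smul n act \<longleftrightarrow>
     partial_action_Cn smul n act \<and>
     (\<forall>i<n. \<forall>j<n. \<forall>a. act i (act j a) = act ((i + j) mod n) a * act i 1)"

end

theory Submission
  imports Defs
begin

text \<open>Write \<open>e = g\<^sup>i \<cdot> 1\<close> and \<open>c = q\<^sup>-\<^sup>i\<close>, so \<open>g\<^sup>i \<cdot> w = c e w\<close>. Multiplicativity of the
  partial action gives \<open>g\<^sup>i \<cdot> w = (g\<^sup>i \<cdot> w) e\<close>, hence \<open>e w e = e w\<close>, and this absorption
  identity collapses \<open>(e w)\<^sup>\<ell>\<close> to \<open>e w\<^sup>\<ell>\<close>. For a symmetric partial action, comparing the two
  expansions of \<open>g\<^sup>i \<cdot> (g\<^sup>n\<^sup>-\<^sup>i \<cdot> a)\<close> shows that \<open>e\<close> is central.\<close>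

lemma kalgebra_vector_space:
  "kalgebra smul \<Longrightarrow> Vector_Spaces.vector_space smul"
  unfolding kalgebra_def by blast

lemma kalgebra_smul_mult_left:
  "kalgebra smul \<Longrightarrow> smul c (a * b) = smul c a * b"
  unfolding kalgebra_def by blast

lemma kalgebra_smul_mult_right:
  "kalgebra smul \<Longrightarrow> smul c (a * b) = a * smul c b"
  unfolding kalgebra_def by blast

lemma kalgebra_smul_mult_smul:
  assumes "kalgebra smul"
  shows "smul c x * smul d y = smul (c * d) (x * y)"
proof -
  interpret vector_space smul
    using kalgebra_vector_space[OF assms] .
  show ?thesis
    by (simp add: kalgebra_smul_mult_left[OF assms, symmetric]
        kalgebra_smul_mult_right[OF assms, symmetric])
qed

lemma kalgebra_smul_power:
  assumes "kalgebra smul"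
  shows "smul c x ^ l = smul (c ^ l) (x ^ l)"
proof (induction l)
  case 0
  interpret vector_space smul
    using kalgebra_vector_space[OF assms] .
  show ?case by simp
next
  case (Suc l)
  then show ?case
    by (simp add: kalgebra_smul_mult_smul[OF assms])
qed

lemma power_mult_absorbing_left:
  fixes e w :: "'a::monoid_mult"
  assumes absorb: "e * w * e = e * w" and "0 < l"
  shows "(e * w) ^ l = e * w ^ l"
  using \<open>0 < l\<close>
proof (induction l rule: nat_induct_non_zero)
  case 1
  show ?case by simp
next
  case (Suc l)
  have "(e * w) ^ Suc l = (e * w * e) * w ^ l"
    by (simp add: Suc.IH mult.assoc)
  also have "\<dots> = e * w * w ^ l"
    by (simp only: absorb)
  also have "\<dots> = e * w ^ Suc l"
    by (simp add: mult.assoc)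
  finally show ?case .
qed

lemma prim_root_nonzero:
  "prim_root n q \<Longrightarrow> 0 < n \<Longrightarrow> q \<noteq> 0"
  unfolding prim_root_def by (metis power_0_left zero_neq_one not_gr0)

lemma partial_action_Cn_absorbs_unit:
  assumes "partial_action_Cn smul n act" and "i < n"
  shows "act i a * act i 1 = act i a"
proof -
  have "act i (a * 1) = act i a * act i 1"
    using assms unfolding partial_action_Cn_def by blast
  then show ?thesis by simp
qed

lemma symmetric_partial_action_Cn_unit_central:
  assumes sym: "symmetric_partial_action_Cn smul n act" and "i < n"
  shows "act i 1 * a = a * act i 1"
proof (cases "i = 0")
  case True
  then show ?thesis
    using sym unfolding symmetric_partial_action_Cn_def partial_action_Cn_def by simp
next
  case False
  then have j: "n - i < n" and sum: "(i + (n - i)) mod n = 0"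
    using \<open>i < n\<close> by auto
  have "act i 1 * act 0 a = act i (act (n - i) a)"
    using sym \<open>i < n\<close> j unfolding symmetric_partial_action_Cn_def partial_action_Cn_def
    by (metis sum)
  also have "\<dots> = act 0 a * act i 1"
    using sym \<open>i < n\<close> j unfolding symmetric_partial_action_Cn_def by (metis sum)
  finally show ?thesis
    using sym unfolding symmetric_partial_action_Cn_def partial_action_Cn_def by simp
qed

lemma partial_action_Cn_power_of_eigenvector:
  assumes alg: "kalgebra smul" and pa: "partial_action_Cn smul n act" and "i < n"
    and "c \<noteq> 0" and eigen: "act i w = smul c (act i 1 * w)" and "0 < l"
  shows "act i w ^ l = smul (c ^ l) (act i 1 * w ^ l)"
proof -
  interpret vector_space smul
    using kalgebra_vector_space[OF alg] .
  let ?e = "act i 1"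
  have "smul c (?e * w * ?e) = smul c (?e * w)"
    using partial_action_Cn_absorbs_unit[OF pa \<open>i < n\<close>, of w]
    by (simp add: eigen kalgebra_smul_mult_left[OF alg])
  then have absorb: "?e * w * ?e = ?e * w"
    using \<open>c \<noteq> 0\<close> by simp
  have "act i w ^ l = smul (c ^ l) ((?e * w) ^ l)"
    by (simp add: eigen kalgebra_smul_power[OF alg])
  also have "\<dots> = smul (c ^ l) (?e * w ^ l)"
    by (simp add: power_mult_absorbing_left[OF absorb \<open>0 < l\<close>])
  finally show ?thesis .
qed

theorem lemma3p5:
  fixes smul :: "'k::field \<Rightarrow> 'a::ring_1 \<Rightarrow> 'a"
    and n :: nat and q :: 'k and act :: "nat \<Rightarrow> 'a \<Rightarrow> 'a" and w :: 'a
  assumes "kalgebra smul"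
    and "n \<ge> 2"
    and "prim_root n q"
    and "partial_action_Cn smul n act"
    and "\<forall>i<n. act i w = smul (inverse q ^ i) (act i 1 * w)"
  shows "(\<forall>i<n. \<forall>l\<ge>1. act i w ^ l = smul (inverse q ^ (i * l)) (act i 1 * w ^ l))
       \<and> (symmetric_partial_action_Cn smul n act \<longrightarrow>
          (\<forall>i<n. \<forall>l\<ge>1. act i w ^ l = smul (inverse q ^ (i * l)) (w ^ l * act i 1)))"
proof -
  have "q \<noteq> 0"
    using prim_root_nonzero[OF \<open>prim_root n q\<close>] \<open>n \<ge> 2\<close> by simp
  have power: "act i w ^ l = smul (inverse q ^ (i * l)) (act i 1 * w ^ l)"
    if "i < n" and "l \<ge> 1" for i l
    using partial_action_Cn_power_of_eigenvector[OF \<open>kalgebra smul\<close>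
        \<open>partial_action_Cn smul n act\<close> \<open>i < n\<close>, of "inverse q ^ i" w l] assms(5) that \<open>q \<noteq> 0\<close>
    by (simp add: power_mult)
  moreover have "act i 1 * w ^ l = w ^ l * act i 1"
    if "symmetric_partial_action_Cn smul n act" and "i < n" for i l
    using symmetric_partial_action_Cn_unit_central that .
  ultimately show ?thesis
    by simp
qed

end
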